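(* Let $\Gamma$ be a connected finite simple graph on $N\ge3$ vertices with $\varepsilon>\frac12$. If $u\ne v$ are vertices with $\mathcal N(u)\cap\mathcal N(v)\ne\emptyset$, then $\mathcal N(u)\triangle\mathcal N(v)\ne\emptyset$ and $$\sum_{w\in\mathcal N(u)\triangle\mathcal N(v)}\Big(\frac{1}{\deg w}-\frac14\Big)>\frac12.$$
   Context: For a finite simple graph $\Gamma=(V,E)$ without isolated vertices, $\deg v$ is the number of neighbours of $v$ and $\mathcal N(v)=\{w\in V: w\sim v\}$; $\triangle$ denotes symmetric difference of sets. The normalized Laplacian acts on functions $f:V\to\mathbb R$ by $\Delta f(v)=f(v)-\frac{1}{\deg v}\sum_{w\sim v}f(w)$; its eigenvalues are $0=\lambda_1\le\lambda_2\le\dots\le\lambda_N$, and $\varepsilon:=\min_i|1-\lambda_i|$. *)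

theory Defs
  imports "HOL-Analysis.Analysis"
begin

definition simple_graph :: "'a set \<Rightarrow> ('a \<Rightarrow> 'a \<Rightarrow> bool) \<Rightarrow> bool" where
  "simple_graph V E \<longleftrightarrow> finite V \<and> (\<forall>x y. E x y \<longrightarrow> x \<in> V \<and> y \<in> V)
     \<and> (\<forall>x y. E x y \<longrightarrow> E y x) \<and> (\<forall>x. \<not> E x x)"

definition connected_graph :: "'a set \<Rightarrow> ('a \<Rightarrow> 'a \<Rightarrow> bool) \<Rightarrow> bool" where
  "connected_graph V E \<longleftrightarrow> (\<forall>x\<in>V. \<forall>y\<in>V. E\<^sup>*\<^sup>* x y)"

definition nbhd :: "'a set \<Rightarrow> ('a \<Rightarrow> 'a \<Rightarrow> bool) \<Rightarrow> 'a \<Rightarrow> 'a set" where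
  "nbhd V E v = {w \<in> V. E w v}"

definition deg :: "'a set \<Rightarrow> ('a \<Rightarrow> 'a \<Rightarrow> bool) \<Rightarrow> 'a \<Rightarrow> nat" where
  "deg V E v = card (nbhd V E v)"

definition sym_diff :: "'a set \<Rightarrow> 'a set \<Rightarrow> 'a set" where
  "sym_diff A B = (A - B) \<union> (B - A)"

definition norm_laplacian :: "'a set \<Rightarrow> ('a \<Rightarrow> 'a \<Rightarrow> bool) \<Rightarrow> ('a \<Rightarrow> real) \<Rightarrow> 'a \<Rightarrow> real" where
  "norm_laplacian V E f v = f v - (\<Sum>w\<in>nbhd V E v. f w) / real (deg V E v)"

definition laplacian_eigenvalue :: "'a set \<Rightarrow> ('a \<Rightarrow> 'a \<Rightarrow> bool) \<Rightarrow> real \<Rightarrow> bool" where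
  "laplacian_eigenvalue V E lam \<longleftrightarrow>
     (\<exists>f. (\<exists>v\<in>V. f v \<noteq> 0) \<and> (\<forall>v\<in>V. norm_laplacian V E f v = lam * f v))"

definition spectral_eps :: "'a set \<Rightarrow> ('a \<Rightarrow> 'a \<Rightarrow> bool) \<Rightarrow> real" where
  "spectral_eps V E = Min {\<bar>1 - lam\<bar> | lam. laplacian_eigenvalue V E lam}"

end

theory Submission
  imports Defs "HOL-Library.Function_Algebras"
begin

(* The eigenvalues of the normalized Laplacian are 1 - mu for the eigenvalues mu of the random
   walk operator P = I - Laplacian, which is self-adjoint for the degree-weighted inner product.
   Hence epsilon^2 is the smallest eigenvalue of P^2, i.e. the minimum of the Rayleigh quotient
   <P f, P f> / <f, f>. Testing it on f = 1_u - 1_v, for which <f, f> = deg u + deg v and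
   <P f, P f> is the sum of 1 / deg w over the symmetric difference of the neighbourhoods, gives
   (deg u + deg v) / 4 < sum 1 / deg w; a common neighbour makes the symmetric difference have at
   most deg u + deg v - 2 elements, which yields the claim. *)

lemma compact_functions_box:
  "compact {g :: 'a \<Rightarrow> real. \<forall>x. g x \<in> (if x \<in> V then {-1..1} else {0})}"
proof -
  have "compactin (product_topology (\<lambda>_. euclidean) UNIV)
          (PiE UNIV (\<lambda>x. if x \<in> V then {-1..1::real} else {0}))"
    by (subst compactin_PiE) auto
  moreover have "PiE UNIV (\<lambda>x. if x \<in> V then {-1..1::real} else {0})
      = {g. \<forall>x. g x \<in> (if x \<in> V then {-1..1} else {0})}"
    by (auto simp: PiE_def extensional_def Pi_def)
  ultimately show ?thesis
    by (simp add: euclidean_product_topology)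
qed

lemma continuous_on_fun_apply [continuous_intros]:
  "continuous_on S (\<lambda>g :: 'a \<Rightarrow> real. g i)"
  by (rule continuous_on_subset[OF continuous_on_product_coordinates]) simp

lemma quadratic_nonneg_imp_linear_coeff_zero:
  fixes a b :: real
  assumes "\<And>t. 2 * t * a + t\<^sup>2 * b \<ge> 0"
  shows "a = 0"
proof (rule ccontr)
  assume "a \<noteq> 0"
  define t where "t = - a / (\<bar>b\<bar> + 1)"
  have "t\<^sup>2 * b \<le> t\<^sup>2 * (\<bar>b\<bar> + 1)"
    by (intro mult_left_mono) auto
  also have "\<dots> = a\<^sup>2 / (\<bar>b\<bar> + 1)"
    by (simp add: t_def power_divide power2_eq_square)
  finally have "2 * t * a + t\<^sup>2 * b \<le> - a\<^sup>2 / (\<bar>b\<bar> + 1)"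
    by (simp add: t_def power2_eq_square)
  moreover have "a\<^sup>2 / (\<bar>b\<bar> + 1) > 0"
    using \<open>a \<noteq> 0\<close> by (simp add: add_pos_nonneg)
  ultimately show False
    using assms[of t] by linarith
qed

lemma card_sym_diff_add_two_le:
  assumes "finite A" "finite B" "A \<inter> B \<noteq> {}"
  shows "card (sym_diff A B) + 2 \<le> card A + card B"
proof -
  have "sym_diff A B \<union> (A \<inter> B) = A \<union> B" "sym_diff A B \<inter> (A \<inter> B) = {}"
    by (auto simp: sym_diff_def)
  then have "card (sym_diff A B) + card (A \<inter> B) = card (A \<union> B)"
    using assms by (metis card_Un_disjoint finite_Int finite_UnI sup.cobounded1 rev_finite_subset)
  moreover have "card A + card B = card (A \<union> B) + card (A \<inter> B)"
    using assms by (intro card_Un_Int)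
  moreover have "card (A \<inter> B) \<ge> 1"
    using assms by (simp add: Suc_le_eq card_gt_0_iff)
  ultimately show ?thesis
    by linarith
qed

interpretation fun_vector_space: vector_space "\<lambda>(c :: real) (f :: 'a \<Rightarrow> real) x. c * f x"
  by unfold_locales (auto simp: fun_eq_iff algebra_simps func_plus)

lemma sum_fun_apply: "sum F S x = (\<Sum>s\<in>S. F s x)"
  for F :: "'b \<Rightarrow> 'a \<Rightarrow> real"
  by (induction S rule: infinite_finite_induct) (auto simp: func_plus func_zero)

locale graph_without_isolated_vertices =
  fixes V :: "'a set" and E :: "'a \<Rightarrow> 'a \<Rightarrow> bool"
  assumes finite_V: "finite V"
    and edge_in_V: "\<And>x y. E x y \<Longrightarrow> x \<in> V \<and> y \<in> V"
    and edge_sym: "\<And>x y. E x y \<Longrightarrow> E y x"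
    and deg_pos: "\<And>x. x \<in> V \<Longrightarrow> deg V E x > 0"
begin

definition walk_op :: "('a \<Rightarrow> real) \<Rightarrow> 'a \<Rightarrow> real" where
  "walk_op g w = (\<Sum>x\<in>nbhd V E w. g x) / real (deg V E w)"

definition deg_inner :: "('a \<Rightarrow> real) \<Rightarrow> ('a \<Rightarrow> real) \<Rightarrow> real" where
  "deg_inner g h = (\<Sum>w\<in>V. real (deg V E w) * g w * h w)"

abbreviation walk_energy :: "('a \<Rightarrow> real) \<Rightarrow> real" where
  "walk_energy g \<equiv> deg_inner (walk_op g) (walk_op g)"

lemma norm_laplacian_eq_walk_op: "norm_laplacian V E f w = f w - walk_op f w"
  by (simp add: norm_laplacian_def walk_op_def)

lemma mem_nbhd_commute: "x \<in> nbhd V E w \<longleftrightarrow> w \<in> nbhd V E x"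
  unfolding nbhd_def using edge_in_V edge_sym by blast

lemma finite_nbhd: "finite (nbhd V E w)"
  using finite_V by (simp add: nbhd_def)

lemma walk_op_cong: "(\<And>x. x \<in> V \<Longrightarrow> g x = g' x) \<Longrightarrow> walk_op g w = walk_op g' w"
  unfolding walk_op_def nbhd_def by (metis (no_types, lifting) mem_Collect_eq sum.cong)

lemma continuous_on_walk_op [continuous_intros]: "continuous_on S (\<lambda>g. walk_op g w)"
  unfolding walk_op_def divide_inverse by (intro continuous_intros)

lemma walk_op_add_scaled: "walk_op (\<lambda>x. g x + a * h x) w = walk_op g w + a * walk_op h w"
  by (simp add: walk_op_def sum.distrib sum_distrib_left add_divide_distrib)

lemma walk_op_scale: "walk_op (\<lambda>x. a * g x) w = a * walk_op g w"
  by (simp add: walk_op_def sum_distrib_left)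

lemma deg_inner_commute: "deg_inner g h = deg_inner h g"
  by (simp add: deg_inner_def mult_ac)

lemma deg_inner_add_scaled_left:
  "deg_inner (\<lambda>x. g x + a * h x) k = deg_inner g k + a * deg_inner h k"
  by (simp add: deg_inner_def sum.distrib sum_distrib_left algebra_simps)

lemma deg_inner_diff_scaled_left:
  "deg_inner (\<lambda>x. g x - a * h x) k = deg_inner g k - a * deg_inner h k"
  by (simp add: deg_inner_def sum_subtractf sum_distrib_left algebra_simps)

lemma deg_inner_scale_left: "deg_inner (\<lambda>x. a * g x) k = a * deg_inner g k"
  by (simp add: deg_inner_def sum_distrib_left algebra_simps)

lemma deg_inner_scale_self: "deg_inner (\<lambda>x. a * g x) (\<lambda>x. a * g x) = a\<^sup>2 * deg_inner g g"
  by (simp add: deg_inner_def sum_distrib_left power2_eq_square mult_ac)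

lemma deg_inner_cong_left:
  "(\<And>w. w \<in> V \<Longrightarrow> g w = g' w) \<Longrightarrow> deg_inner g h = deg_inner g' h"
  by (simp add: deg_inner_def)

lemma deg_inner_add_scaled_self:
  "deg_inner (\<lambda>x. g x + t * h x) (\<lambda>x. g x + t * h x)
     = deg_inner g g + 2 * t * deg_inner g h + t\<^sup>2 * deg_inner h h"
  unfolding deg_inner_add_scaled_left
  by (subst (1 2) deg_inner_commute)
     (simp add: deg_inner_add_scaled_left deg_inner_commute[of h g] power2_eq_square algebra_simps)

lemma deg_inner_self_nonneg: "deg_inner g g \<ge> 0"
  unfolding deg_inner_def by (intro sum_nonneg) (simp add: mult.assoc)

lemma square_le_deg_inner_self:
  assumes "x \<in> V"
  shows "(g x)\<^sup>2 \<le> deg_inner g g"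
proof -
  have "(g x)\<^sup>2 \<le> real (deg V E x) * g x * g x"
    using deg_pos[OF assms] by (simp add: power2_eq_square mult.assoc mult_le_cancel_right1)
  also have "\<dots> \<le> deg_inner g g"
    unfolding deg_inner_def
    by (rule member_le_sum[OF assms]) (auto simp: mult.assoc finite_V)
  finally show ?thesis .
qed

lemma deg_inner_self_eq_0D: "deg_inner g g = 0 \<Longrightarrow> w \<in> V \<Longrightarrow> g w = 0"
  using square_le_deg_inner_self[of w g] by simp

lemma sum_nbhd: "(\<Sum>x\<in>nbhd V E w. f x) = (\<Sum>x\<in>V. if E x w then f x else 0)"
  using finite_V by (simp add: nbhd_def sum.inter_filter)

lemma deg_inner_walk_op_left:
  "deg_inner (walk_op g) h = (\<Sum>w\<in>V. \<Sum>x\<in>V. if E x w then g x * h w else 0)"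
  unfolding deg_inner_def walk_op_def sum_nbhd
  by (intro sum.cong refl)
     (auto simp: deg_pos less_imp_neq[OF deg_pos, symmetric] sum_distrib_right intro!: sum.cong)

lemma walk_op_self_adjoint: "deg_inner (walk_op g) h = deg_inner g (walk_op h)"
proof -
  have "deg_inner (walk_op g) h = (\<Sum>x\<in>V. \<Sum>w\<in>V. if E x w then g x * h w else 0)"
    unfolding deg_inner_walk_op_left by (rule sum.swap)
  also have "\<dots> = (\<Sum>x\<in>V. \<Sum>w\<in>V. if E w x then h w * g x else 0)"
    using edge_sym by (intro sum.cong refl) (metis mult.commute)
  also have "\<dots> = deg_inner g (walk_op h)"
    by (simp only: deg_inner_walk_op_left deg_inner_commute[of g])
  finally show ?thesis .
qed

lemma walk_energy_add_scaled:
  "walk_energy (\<lambda>x. g x + t * h x)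
     = walk_energy g + 2 * t * deg_inner (walk_op g) (walk_op h) + t\<^sup>2 * walk_energy h"
proof -
  have "walk_op (\<lambda>x. g x + t * h x) = (\<lambda>w. walk_op g w + t * walk_op h w)"
    by (simp add: walk_op_add_scaled fun_eq_iff)
  then show ?thesis
    by (simp add: deg_inner_add_scaled_self)
qed

lemma walk_energy_scale: "walk_energy (\<lambda>x. a * g x) = a\<^sup>2 * walk_energy g"
proof -
  have "walk_op (\<lambda>x. a * g x) = (\<lambda>w. a * walk_op g w)"
    by (simp add: walk_op_scale fun_eq_iff)
  then show ?thesis
    by (simp add: deg_inner_scale_self)
qed

lemma exists_walk_energy_minimizer:
  assumes "V \<noteq> {}"
  obtains g where "deg_inner g g = 1"
    and "\<And>h. deg_inner h h = 1 \<Longrightarrow> walk_energy g \<le> walk_energy h"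
proof -
  (* All degrees are at least 1, so unit vectors take values in [-1, 1] on V; zeroed off V they
     form a compact subset of the product topology. *)
  define K where "K = {g :: 'a \<Rightarrow> real. \<forall>x. g x \<in> (if x \<in> V then {-1..1} else {0})}
    \<inter> {g. deg_inner g g = 1}"
  have "continuous_on UNIV (\<lambda>g. deg_inner g g)"
    unfolding deg_inner_def by (intro continuous_intros)
  then have "compact K"
    unfolding K_def
    by (intro compact_Int_closed compact_functions_box closed_Collect_eq continuous_on_const)
  have restrict_in_K: "(\<lambda>x. if x \<in> V then h x else 0) \<in> K" if "deg_inner h h = 1" for h
  proof -
    have "\<bar>h x\<bar> \<le> 1" if "x \<in> V" for x
      using square_le_deg_inner_self[OF that, of h] \<open>deg_inner h h = 1\<close>
      by (simp add: abs_square_le_1)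
    moreover have "deg_inner (\<lambda>x. if x \<in> V then h x else 0) (\<lambda>x. if x \<in> V then h x else 0) = 1"
      using that by (simp add: deg_inner_def)
    ultimately show ?thesis
      by (auto simp: K_def abs_le_iff)
  qed
  obtain w0 where "w0 \<in> V"
    using assms by blast
  define g0 where "g0 x = (if x = w0 then 1 / sqrt (real (deg V E w0)) else 0)" for x
  have "deg_inner g0 g0 = real (deg V E w0) * (1 / sqrt (real (deg V E w0)))\<^sup>2"
    unfolding deg_inner_def g0_def using \<open>w0 \<in> V\<close> finite_V
    by (simp add: if_distrib power2_eq_square cong: if_cong)
  then have "deg_inner g0 g0 = 1"
    using deg_pos[OF \<open>w0 \<in> V\<close>] by (simp add: power_divide)
  then have "K \<noteq> {}"
    using restrict_in_K by blast
  moreover have "continuous_on K (\<lambda>g. walk_energy g)"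
    unfolding deg_inner_def by (intro continuous_intros)
  ultimately obtain g where "g \<in> K" and g_min: "\<And>k. k \<in> K \<Longrightarrow> walk_energy g \<le> walk_energy k"
    using continuous_attains_inf[OF \<open>compact K\<close>] by blast
  show thesis
  proof
    show "deg_inner g g = 1"
      using \<open>g \<in> K\<close> by (simp add: K_def)
    fix h assume "deg_inner h h = 1"
    have "walk_op (\<lambda>x. if x \<in> V then h x else 0) = walk_op h"
      by (rule ext, rule walk_op_cong) simp
    then show "walk_energy g \<le> walk_energy h"
      using g_min[OF restrict_in_K[OF \<open>deg_inner h h = 1\<close>]] by simp
  qed
qed

lemma rayleigh_bound_of_minimizer:
  assumes "deg_inner g g = 1"
    and min: "\<And>k. deg_inner k k = 1 \<Longrightarrow> walk_energy g \<le> walk_energy k"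
  shows "walk_energy g * deg_inner h h \<le> walk_energy h"
proof (cases "deg_inner h h = 0")
  case True
  then have "walk_op h = walk_op (\<lambda>_. 0)"
    using deg_inner_self_eq_0D by (auto intro!: walk_op_cong)
  then show ?thesis
    using True by (simp add: walk_op_def deg_inner_def)
next
  case False
  define c where "c = deg_inner h h"
  have "c > 0"
    using False deg_inner_self_nonneg[of h] by (simp add: c_def)
  have "deg_inner (\<lambda>x. (1 / sqrt c) * h x) (\<lambda>x. (1 / sqrt c) * h x) = 1"
    unfolding deg_inner_scale_self using \<open>c > 0\<close> by (simp add: c_def[symmetric] power_divide)
  then have "walk_energy g \<le> (1 / sqrt c)\<^sup>2 * walk_energy h"
    using min walk_energy_scale by metis
  then show ?thesis
    using \<open>c > 0\<close> by (simp add: c_def[symmetric] power_divide field_simps)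
qed

lemma rayleigh_minimizer_eigenvector:
  assumes "deg_inner g g = 1"
    and bound: "\<And>h. walk_energy g * deg_inner h h \<le> walk_energy h"
  shows "w \<in> V \<Longrightarrow> walk_op (walk_op g) w = walk_energy g * g w"
proof -
  let ?m = "walk_energy g"
  have first_variation: "deg_inner (walk_op g) (walk_op h) = ?m * deg_inner g h" for h
  proof -
    have "2 * t * (deg_inner (walk_op g) (walk_op h) - ?m * deg_inner g h)
        + t\<^sup>2 * (walk_energy h - ?m * deg_inner h h) \<ge> 0" for t
      using bound[of "\<lambda>x. g x + t * h x"] assms(1)
      unfolding walk_energy_add_scaled deg_inner_add_scaled_self
      by (simp add: algebra_simps)
    then show ?thesis
      using quadratic_nonneg_imp_linear_coeff_zero by fastforce
  qed
  define k where "k = (\<lambda>x. walk_op (walk_op g) x - ?m * g x)"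
  have "deg_inner k h = 0" for h
    unfolding k_def deg_inner_diff_scaled_left
    using first_variation[of h] walk_op_self_adjoint[of "walk_op g" h] by simp
  then show "w \<in> V \<Longrightarrow> walk_op (walk_op g) w = ?m * g w"
    using deg_inner_self_eq_0D[of k w] by (simp add: k_def)
qed

lemma eigenvalue_of_walk_op_square:
  assumes "\<exists>w\<in>V. g w \<noteq> 0" "0 \<le> m" "\<And>w. w \<in> V \<Longrightarrow> walk_op (walk_op g) w = m * g w"
  shows "\<exists>lam. laplacian_eigenvalue V E lam \<and> \<bar>1 - lam\<bar> = sqrt m"
proof -
  (* (P - s)(P + s) g = 0: either P g + s g is an eigenvector of P for s, or g is one for -s. *)
  define s where "s = sqrt m"
  have "s \<ge> 0" "s * s = m"
    using assms(2) by (auto simp: s_def)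
  define h where "h = (\<lambda>x. walk_op g x + s * g x)"
  have walk_h: "walk_op h w = s * h w" if "w \<in> V" for w
    using assms(3)[OF that] \<open>s * s = m\<close> unfolding h_def walk_op_add_scaled
    by (simp add: algebra_simps)
  show ?thesis
  proof (cases "\<exists>w\<in>V. h w \<noteq> 0")
    case True
    then have "laplacian_eigenvalue V E (1 - s)"
      unfolding laplacian_eigenvalue_def
      by (intro exI[of _ h]) (simp add: walk_h norm_laplacian_eq_walk_op algebra_simps)
    then show ?thesis
      using \<open>s \<ge> 0\<close> by (auto simp: s_def)
  next
    case False
    then have "walk_op g w = - s * g w" if "w \<in> V" for w
      using that by (auto simp: h_def)
    then have "laplacian_eigenvalue V E (1 + s)"
      unfolding laplacian_eigenvalue_def
      using assms(1) by (intro exI[of _ g]) (simp add: norm_laplacian_eq_walk_op algebra_simps)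
    then show ?thesis
      using \<open>s \<ge> 0\<close> by (auto simp: s_def)
  qed
qed

lemma finite_orthogonal_family:
  assumes supp: "\<And>f x. f \<in> F \<Longrightarrow> x \<notin> V \<Longrightarrow> f x = 0"
    and pos: "\<And>f. f \<in> F \<Longrightarrow> deg_inner f f > 0"
    and orth: "\<And>f g. f \<in> F \<Longrightarrow> g \<in> F \<Longrightarrow> f \<noteq> g \<Longrightarrow> deg_inner f g = 0"
  shows "finite F"
proof -
  have independent: "fun_vector_space.independent F"
  proof
    assume "fun_vector_space.dependent F"
    then obtain T c f0 where T: "finite T" "T \<subseteq> F" "(\<Sum>f\<in>T. (\<lambda>x. c f * f x)) = 0"
      and f0: "f0 \<in> T" "c f0 \<noteq> 0"
      unfolding fun_vector_space.dependent_explicit by blast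
    have "0 = deg_inner (\<Sum>f\<in>T. (\<lambda>x. c f * f x)) f0"
      by (simp add: T(3) deg_inner_def)
    also have "\<dots> = (\<Sum>w\<in>V. \<Sum>f\<in>T. c f * (real (deg V E w) * f w * f0 w))"
      by (simp add: deg_inner_def sum_fun_apply sum_distrib_left sum_distrib_right mult_ac)
    also have "\<dots> = (\<Sum>f\<in>T. c f * deg_inner f f0)"
      by (subst sum.swap) (simp add: deg_inner_def sum_distrib_left)
    also have "\<dots> = c f0 * deg_inner f0 f0"
    proof -
      have "f \<in> F" if "f \<in> T" for f
        using that T(2) by blast
      then show ?thesis
        using f0(1) by (subst sum.remove[OF T(1) f0(1)]) (simp add: orth sum.neutral)
    qed
    finally show False
      using f0 T(2) pos[of f0] by auto
  qed
  have span: "F \<subseteq> fun_vector_space.span ((\<lambda>y x. of_bool (x = y)) ` V)"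
  proof
    fix f assume "f \<in> F"
    have f_eq: "f = (\<Sum>y\<in>V. (\<lambda>x. f y * of_bool (x = y)))"
    proof
      fix x
      show "f x = (\<Sum>y\<in>V. (\<lambda>x. f y * of_bool (x = y))) x"
        using supp[OF \<open>f \<in> F\<close>, of x] finite_V
        by (cases "x \<in> V") (auto simp: sum_fun_apply of_bool_def if_distrib cong: if_cong)
    qed
    show "f \<in> fun_vector_space.span ((\<lambda>y x. of_bool (x = y)) ` V)"
      by (subst f_eq, intro fun_vector_space.span_sum fun_vector_space.span_scale
          fun_vector_space.span_base) auto
  qed
  show ?thesis
    using fun_vector_space.independent_span_bound[OF _ independent span] finite_V by simp
qed

lemma finite_laplacian_eigenvalues: "finite {lam. laplacian_eigenvalue V E lam}"
proof -
  define L where "L = {lam. laplacian_eigenvalue V E lam}"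
  (* Zeroing the chosen eigenvectors off V keeps them in the finite span of vertex indicators. *)
  define eigvec where "eigvec lam = (\<lambda>x. if x \<in> V then (SOME f. (\<exists>v\<in>V. f v \<noteq> 0)
    \<and> (\<forall>v\<in>V. norm_laplacian V E f v = lam * f v)) x else 0)" for lam
  have eigvec: "(\<exists>v\<in>V. eigvec lam v \<noteq> 0)
      \<and> (\<forall>v\<in>V. walk_op (eigvec lam) v = (1 - lam) * eigvec lam v)"
    if "lam \<in> L" for lam
  proof -
    define f where "f = (SOME f. (\<exists>v\<in>V. f v \<noteq> 0)
      \<and> (\<forall>v\<in>V. norm_laplacian V E f v = lam * f v))"
    have "\<exists>f. (\<exists>v\<in>V. f v \<noteq> 0) \<and> (\<forall>v\<in>V. norm_laplacian V E f v = lam * f v)"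
      using that by (simp add: L_def laplacian_eigenvalue_def)
    then have "(\<exists>v\<in>V. f v \<noteq> 0) \<and> (\<forall>v\<in>V. norm_laplacian V E f v = lam * f v)"
      unfolding f_def by (rule someI_ex)
    moreover have eigvec_eq: "eigvec lam = (\<lambda>x. if x \<in> V then f x else 0)"
      unfolding eigvec_def f_def by (rule refl)
    moreover have "walk_op (eigvec lam) v = walk_op f v" for v
      by (rule walk_op_cong) (simp add: eigvec_eq)
    ultimately show ?thesis
      by (auto simp: norm_laplacian_eq_walk_op algebra_simps)
  qed
  have pos: "deg_inner (eigvec lam) (eigvec lam) > 0" if "lam \<in> L" for lam
    using eigvec[OF that] deg_inner_self_nonneg[of "eigvec lam"] deg_inner_self_eq_0D
    by (metis order_less_le)
  have orth: "deg_inner (eigvec l1) (eigvec l2) = 0" if "l1 \<in> L" "l2 \<in> L" "l1 \<noteq> l2" for l1 l2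
  proof -
    have "(1 - l1) * deg_inner (eigvec l1) (eigvec l2)
        = deg_inner (walk_op (eigvec l1)) (eigvec l2)"
      using eigvec[OF that(1)] by (subst deg_inner_scale_left[symmetric], intro deg_inner_cong_left) simp
    also have "\<dots> = deg_inner (eigvec l1) (walk_op (eigvec l2))"
      by (rule walk_op_self_adjoint)
    also have "\<dots> = (1 - l2) * deg_inner (eigvec l1) (eigvec l2)"
      using eigvec[OF that(2)]
      by (subst (1 2) deg_inner_commute, subst deg_inner_scale_left[symmetric],
          intro deg_inner_cong_left) simp
    finally show ?thesis
      using that(3) by (simp add: algebra_simps)
  qed
  have "inj_on eigvec L"
    by (rule inj_onI) (metis orth pos less_irrefl)
  moreover have "finite (eigvec ` L)"
  proof (rule finite_orthogonal_family)
    show "\<And>f x. f \<in> eigvec ` L \<Longrightarrow> x \<notin> V \<Longrightarrow> f x = 0"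
      by (auto simp: eigvec_def)
    show "\<And>f. f \<in> eigvec ` L \<Longrightarrow> deg_inner f f > 0"
      using pos by blast
    show "\<And>f g. f \<in> eigvec ` L \<Longrightarrow> g \<in> eigvec ` L \<Longrightarrow> f \<noteq> g \<Longrightarrow> deg_inner f g = 0"
      using orth by auto
  qed
  ultimately show ?thesis
    unfolding L_def[symmetric] using finite_imageD by blast
qed

lemma spectral_eps_sq_rayleigh_bound:
  assumes "V \<noteq> {}"
  shows "(spectral_eps V E)\<^sup>2 * deg_inner h h \<le> walk_energy h"
proof -
  obtain g where g_unit: "deg_inner g g = 1"
    and g_min: "\<And>k. deg_inner k k = 1 \<Longrightarrow> walk_energy g \<le> walk_energy k"
    using exists_walk_energy_minimizer[OF assms] by blast
  let ?m = "walk_energy g"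
  have bound: "\<And>k. ?m * deg_inner k k \<le> walk_energy k"
    using rayleigh_bound_of_minimizer[OF g_unit g_min] .
  have "\<exists>w\<in>V. g w \<noteq> 0"
  proof (rule ccontr)
    assume "\<not> (\<exists>w\<in>V. g w \<noteq> 0)"
    then have "deg_inner g g = 0"
      by (simp add: deg_inner_def)
    then show False
      using g_unit by simp
  qed
  then obtain lam where "laplacian_eigenvalue V E lam" "\<bar>1 - lam\<bar> = sqrt ?m"
    using eigenvalue_of_walk_op_square[OF _ deg_inner_self_nonneg
        rayleigh_minimizer_eigenvector[OF g_unit bound]] by blast
  define S where "S = {\<bar>1 - lam\<bar> |lam. laplacian_eigenvalue V E lam}"
  have "S = (\<lambda>lam. \<bar>1 - lam\<bar>) ` {lam. laplacian_eigenvalue V E lam}"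
    by (auto simp: S_def)
  then have "finite S"
    using finite_laplacian_eigenvalues by simp
  have "sqrt ?m \<in> S"
    unfolding S_def using \<open>laplacian_eigenvalue V E lam\<close> \<open>\<bar>1 - lam\<bar> = sqrt ?m\<close>
    by (auto intro!: exI[of _ lam])
  then have "0 \<le> spectral_eps V E" "spectral_eps V E \<le> sqrt ?m"
    unfolding spectral_eps_def S_def[symmetric] using \<open>finite S\<close>
    by (auto intro!: Min.boundedI simp: S_def)
  then have "(spectral_eps V E)\<^sup>2 \<le> ?m"
    using power_mono[of "spectral_eps V E" "sqrt ?m" 2] deg_inner_self_nonneg by simp
  then show ?thesis
    using bound[of h] mult_right_mono[OF _ deg_inner_self_nonneg[of h]] by (meson order_trans)
qed

lemma deg_inner_vertex_difference:
  assumes "u \<in> V" "v \<in> V" "u \<noteq> v"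
  shows "deg_inner (\<lambda>x. of_bool (x = u) - of_bool (x = v)) (\<lambda>x. of_bool (x = u) - of_bool (x = v))
    = real (deg V E u) + real (deg V E v)"
proof -
  have "(of_bool (x = u) - of_bool (x = v))\<^sup>2 = (of_bool (x = u) + of_bool (x = v) :: real)" for x
    using assms(3) by (cases "x = u"; cases "x = v") auto
  then show ?thesis
    using assms finite_V by (simp add: deg_inner_def mult.assoc power2_eq_square[symmetric]
        distrib_left sum.distrib)
qed

lemma walk_energy_vertex_difference:
  assumes "u \<in> V" "v \<in> V"
  shows "walk_energy (\<lambda>x. of_bool (x = u) - of_bool (x = v))
    = (\<Sum>w\<in>sym_diff (nbhd V E u) (nbhd V E v). 1 / real (deg V E w))"
proof -
  let ?SD = "sym_diff (nbhd V E u) (nbhd V E v)"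
  have walk: "walk_op (\<lambda>x. of_bool (x = u) - of_bool (x = v)) w
      = (of_bool (w \<in> nbhd V E u) - of_bool (w \<in> nbhd V E v)) / real (deg V E w)" for w
    using assms finite_nbhd
    by (simp add: walk_op_def sum_subtractf of_bool_def mem_nbhd_commute[of u] mem_nbhd_commute[of v])
  have "walk_energy (\<lambda>x. of_bool (x = u) - of_bool (x = v))
      = (\<Sum>w\<in>V. if w \<in> ?SD then 1 / real (deg V E w) else 0)"
    unfolding deg_inner_def walk
    by (intro sum.cong) (auto simp: sym_diff_def power2_eq_square dest: deg_pos)
  also have "\<dots> = (\<Sum>w\<in>?SD. 1 / real (deg V E w))"
    using finite_V by (subst sum.inter_filter[symmetric]) (auto intro!: sum.cong
        simp: sym_diff_def nbhd_def)
  finally show ?thesis .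
qed

end

lemma connected_graph_without_isolated_vertices:
  assumes "simple_graph V E" "connected_graph V E" "card V \<ge> 2"
  shows "graph_without_isolated_vertices V E"
proof
  show "finite V" "\<And>x y. E x y \<Longrightarrow> x \<in> V \<and> y \<in> V" "\<And>x y. E x y \<Longrightarrow> E y x"
    using assms(1) by (auto simp: simple_graph_def)
  fix x assume "x \<in> V"
  have "\<not> V \<subseteq> {x}"
  proof
    assume "V \<subseteq> {x}"
    then have "card V \<le> 1"
      using card_mono[of "{x}" V] by simp
    then show False
      using assms(3) by simp
  qed
  then obtain y where "y \<in> V" "y \<noteq> x"
    by blast
  then have "E\<^sup>*\<^sup>* x y"
    using assms(2) \<open>x \<in> V\<close> by (simp add: connected_graph_def)
  then obtain z where "E x z"
    using \<open>y \<noteq> x\<close> by (cases rule: converse_rtranclpE) auto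
  then have "z \<in> nbhd V E x"
    using assms(1) by (auto simp: nbhd_def simple_graph_def)
  then show "deg V E x > 0"
    using \<open>finite V\<close> by (auto simp: deg_def nbhd_def card_gt_0_iff)
qed

theorem mainTheorem14:
  fixes V :: "'a set" and E :: "'a \<Rightarrow> 'a \<Rightarrow> bool" and u v :: 'a
  assumes "simple_graph V E"
    and "connected_graph V E"
    and "card V \<ge> 3"
    and "spectral_eps V E > 1/2"
    and "u \<in> V" and "v \<in> V" and "u \<noteq> v"
    and "nbhd V E u \<inter> nbhd V E v \<noteq> {}"
  shows "sym_diff (nbhd V E u) (nbhd V E v) \<noteq> {}
    \<and> (\<Sum>w\<in>sym_diff (nbhd V E u) (nbhd V E v). 1 / real (deg V E w) - 1/4) > 1/2"
proof -
  interpret graph_without_isolated_vertices V E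
    using assms(1-3) by (intro connected_graph_without_isolated_vertices) auto
  let ?SD = "sym_diff (nbhd V E u) (nbhd V E v)"
  have "V \<noteq> {}"
    using assms(5) by blast
  define D where "D = real (deg V E u) + real (deg V E v)"
  have rayleigh: "(spectral_eps V E)\<^sup>2 * D \<le> (\<Sum>w\<in>?SD. 1 / real (deg V E w))"
    using spectral_eps_sq_rayleigh_bound[OF \<open>V \<noteq> {}\<close>, of "\<lambda>x. of_bool (x = u) - of_bool (x = v)"]
    unfolding deg_inner_vertex_difference[OF assms(5-7)] walk_energy_vertex_difference[OF assms(5,6)]
      D_def .
  have "(1/2)\<^sup>2 < (spectral_eps V E)\<^sup>2"
    using assms(4) by (intro power_strict_mono) auto
  moreover have "D > 0"
    using deg_pos assms(5) by (simp add: D_def add_pos_nonneg)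
  ultimately have "1/4 * D < (spectral_eps V E)\<^sup>2 * D"
    by (intro mult_strict_right_mono) (auto simp: power_divide)
  moreover have "real (card ?SD) + 2 \<le> D"
    using card_sym_diff_add_two_le[OF finite_nbhd finite_nbhd assms(8)]
    unfolding D_def deg_def by linarith
  ultimately have "(\<Sum>w\<in>?SD. 1 / real (deg V E w)) - real (card ?SD) / 4 > 1/2"
    using rayleigh by linarith
  then have sum_gt: "(\<Sum>w\<in>?SD. 1 / real (deg V E w) - 1/4) > 1/2"
    by (simp add: sum_subtractf)
  moreover have "?SD \<noteq> {}"
  proof
    assume "?SD = {}"
    then show False
      using sum_gt by simp
  qed
  ultimately show ?thesis
    by blast
qed

end
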